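(* Let $(H,B_1,B_2)$ be a Rota-Baxter system of Hopf algebras with descendent operation $\circ$ and cocycle $\sigma$. Then $(H,\cdot,\circ)$ is a Hopf truss with cocycle $\sigma$.
   Context: $\mathbb{F}$ is a field of characteristic $0$; Sweedler notation $\Delta(a)=a_1\otimes a_2$. A Rota-Baxter system of Hopf algebras is a triple $(H,B_1,B_2)$ where $(H,\cdot,1,\Delta,\epsilon,S)$ is a cocommutative Hopf algebra and $B_1,B_2:H\to H$ are coalgebra homomorphisms with $B_1(1)=B_2(1)=1$ such that for all $a,b\in H$: $B_1(a)B_1(b)=B_1(B_1(a_1)bS(B_2(a_2)))$ and $B_2(a)B_2(b)=B_2(B_1(a_1)bS(B_2(a_2)))$. Its descendent operation is $a\circ b=B_1(a_1)bS(B_2(a_2))$ and cocycle $\sigma(a)=B_1(a_1)S(B_2(a_2))$. Given a Hopf algebra $(H,\cdot,1,\Delta,\epsilon,S)$ and a binary operation $\circ$ on $H$ making $(H,\circ,\Delta,\epsilon)$ a (not necessarily unital) bialgebra (i.e. $\circ$ is associative and $\Delta,\epsilon$ are multiplicative for $\circ$), $(H,\cdot,\circ)$ is a Hopf truss with cocycle $\sigma$ if $\sigma:H\to H$ is a coalgebra homomorphism and $a\circ(bc)=(a_1\circ b)S(\sigma(a_2))(a_3\circ c)$ for all $a,b,c\in H$. *)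

theory Defs
  imports Complex_Main
begin

text \<open>
An element of H (x) H (resp. H (x) H (x) H) is represented by a finite list
of pairs (resp. triples), standing for the sum of the corresponding elementary tensors.
Two such representatives denote the same tensor iff they agree under every scalar-valued
bilinear (resp. trilinear) form (universal property of the tensor product, together with the
fact that scalar-valued forms separate the points of a tensor product of vector spaces).
The comultiplication is a function D returning a representative of D(a), and a Sweedler sum
a_1 (x) a_2 |-> f a_1 a_2 (for f bilinear) is evaluated on that representative.
\<close>

definition sw2 :: "('h \<times> 'h) list \<Rightarrow> ('h \<Rightarrow> 'h \<Rightarrow> 'b::comm_monoid_add) \<Rightarrow> 'b" where
  "sw2 T f = sum_list (map (\<lambda>(x, y). f x y) T)"

definition sw3 :: "('h \<times> 'h \<times> 'h) list \<Rightarrow> ('h \<Rightarrow> 'h \<Rightarrow> 'h \<Rightarrow> 'b::comm_monoid_add) \<Rightarrow> 'b" where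
  "sw3 T f = sum_list (map (\<lambda>(x, y, z). f x y z) T)"

definition bilinear_form :: "('k::field \<Rightarrow> 'h::ab_group_add \<Rightarrow> 'h) \<Rightarrow> ('h \<Rightarrow> 'h \<Rightarrow> 'k) \<Rightarrow> bool" where
  "bilinear_form sc \<beta> \<longleftrightarrow>
     (\<forall>x. Vector_Spaces.linear sc (*) (\<beta> x)) \<and> (\<forall>y. Vector_Spaces.linear sc (*) (\<lambda>x. \<beta> x y))"

definition trilinear_form :: "('k::field \<Rightarrow> 'h::ab_group_add \<Rightarrow> 'h) \<Rightarrow> ('h \<Rightarrow> 'h \<Rightarrow> 'h \<Rightarrow> 'k) \<Rightarrow> bool" where
  "trilinear_form sc \<tau> \<longleftrightarrow>
     (\<forall>y z. Vector_Spaces.linear sc (*) (\<lambda>x. \<tau> x y z)) \<and>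
     (\<forall>x z. Vector_Spaces.linear sc (*) (\<lambda>y. \<tau> x y z)) \<and>
     (\<forall>x y. Vector_Spaces.linear sc (*) (\<lambda>z. \<tau> x y z))"

definition teq2 :: "('k::field \<Rightarrow> 'h::ab_group_add \<Rightarrow> 'h) \<Rightarrow> ('h \<times> 'h) list \<Rightarrow> ('h \<times> 'h) list \<Rightarrow> bool" where
  "teq2 sc T T' \<longleftrightarrow> (\<forall>\<beta>. bilinear_form sc \<beta> \<longrightarrow> sw2 T \<beta> = sw2 T' \<beta>)"

definition teq3 :: "('k::field \<Rightarrow> 'h::ab_group_add \<Rightarrow> 'h) \<Rightarrow> ('h \<times> 'h \<times> 'h) list \<Rightarrow> ('h \<times> 'h \<times> 'h) list \<Rightarrow> bool" where
  "teq3 sc T T' \<longleftrightarrow> (\<forall>\<tau>. trilinear_form sc \<tau> \<longrightarrow> sw3 T \<tau> = sw3 T' \<tau>)"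

text \<open>(D (x) id) D a, and (id (x) D) D a.\<close>
definition comul2_left :: "('h \<Rightarrow> ('h \<times> 'h) list) \<Rightarrow> 'h \<Rightarrow> ('h \<times> 'h \<times> 'h) list" where
  "comul2_left D a = concat (map (\<lambda>(x, z). map (\<lambda>(u, v). (u, v, z)) (D x)) (D a))"

definition comul2_right :: "('h \<Rightarrow> ('h \<times> 'h) list) \<Rightarrow> 'h \<Rightarrow> ('h \<times> 'h \<times> 'h) list" where
  "comul2_right D a = concat (map (\<lambda>(x, y). map (\<lambda>(u, v). (x, u, v)) (D y)) (D a))"

definition tmul :: "('h \<Rightarrow> 'h \<Rightarrow> 'h) \<Rightarrow> ('h \<times> 'h) list \<Rightarrow> ('h \<times> 'h) list \<Rightarrow> ('h \<times> 'h) list" where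
  "tmul m T T' = concat (map (\<lambda>(u, v). map (\<lambda>(u', v'). (m u u', m v v')) T') T)"

definition hopf_algebra ::
  "('k::field \<Rightarrow> 'h::ring_1 \<Rightarrow> 'h) \<Rightarrow> ('h \<Rightarrow> ('h \<times> 'h) list) \<Rightarrow> ('h \<Rightarrow> 'k) \<Rightarrow> ('h \<Rightarrow> 'h) \<Rightarrow> bool" where
  "hopf_algebra sc D \<epsilon> S \<longleftrightarrow>
     \<comment> \<open>H is an associative unital algebra over 'k\<close>
     vector_space sc \<and>
     (\<forall>c x y. sc c (x * y) = sc c x * y \<and> sc c (x * y) = x * sc c y) \<and>
     \<comment> \<open>H is a coalgebra: D and \<epsilon> linear, coassociative, counital\<close>
     Vector_Spaces.linear sc (*) \<epsilon> \<and>
     (\<forall>x y. teq2 sc (D (x + y)) (D x @ D y)) \<and>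
     (\<forall>c x. teq2 sc (D (sc c x)) (map (\<lambda>(u, v). (sc c u, v)) (D x))) \<and>
     (\<forall>x. teq3 sc (comul2_left D x) (comul2_right D x)) \<and>
     (\<forall>x. sw2 (D x) (\<lambda>u v. sc (\<epsilon> u) v) = x) \<and>
     (\<forall>x. sw2 (D x) (\<lambda>u v. sc (\<epsilon> v) u) = x) \<and>
     \<comment> \<open>bialgebra compatibility\<close>
     (\<forall>x y. teq2 sc (D (x * y)) (tmul (*) (D x) (D y))) \<and>
     teq2 sc (D 1) [(1, 1)] \<and>
     (\<forall>x y. \<epsilon> (x * y) = \<epsilon> x * \<epsilon> y) \<and> \<epsilon> 1 = 1 \<and>
     \<comment> \<open>antipode\<close>
     Vector_Spaces.linear sc sc S \<and>
     (\<forall>x. sw2 (D x) (\<lambda>u v. S u * v) = sc (\<epsilon> x) 1) \<and>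
     (\<forall>x. sw2 (D x) (\<lambda>u v. u * S v) = sc (\<epsilon> x) 1)"

definition cocommutative :: "('k::field \<Rightarrow> 'h::ab_group_add \<Rightarrow> 'h) \<Rightarrow> ('h \<Rightarrow> ('h \<times> 'h) list) \<Rightarrow> bool" where
  "cocommutative sc D \<longleftrightarrow> (\<forall>x. teq2 sc (D x) (map (\<lambda>(u, v). (v, u)) (D x)))"

definition coalg_hom ::
  "('k::field \<Rightarrow> 'h::ab_group_add \<Rightarrow> 'h) \<Rightarrow> ('h \<Rightarrow> ('h \<times> 'h) list) \<Rightarrow> ('h \<Rightarrow> 'k) \<Rightarrow> ('h \<Rightarrow> 'h) \<Rightarrow> bool" where
  "coalg_hom sc D \<epsilon> B \<longleftrightarrow>
     Vector_Spaces.linear sc sc B \<and>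
     (\<forall>x. teq2 sc (D (B x)) (map (\<lambda>(u, v). (B u, B v)) (D x))) \<and>
     (\<forall>x. \<epsilon> (B x) = \<epsilon> x)"

definition desc :: "('h \<Rightarrow> ('h \<times> 'h) list) \<Rightarrow> ('h \<Rightarrow> 'h) \<Rightarrow> ('h \<Rightarrow> 'h) \<Rightarrow> ('h \<Rightarrow> 'h) \<Rightarrow> 'h \<Rightarrow> 'h \<Rightarrow> 'h::ring_1" where
  "desc D S B1 B2 a b = sw2 (D a) (\<lambda>x y. B1 x * b * S (B2 y))"

definition cocyc :: "('h \<Rightarrow> ('h \<times> 'h) list) \<Rightarrow> ('h \<Rightarrow> 'h) \<Rightarrow> ('h \<Rightarrow> 'h) \<Rightarrow> ('h \<Rightarrow> 'h) \<Rightarrow> 'h \<Rightarrow> 'h::ring_1" where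
  "cocyc D S B1 B2 a = sw2 (D a) (\<lambda>x y. B1 x * S (B2 y))"

definition rota_baxter_system ::
  "('k::field \<Rightarrow> 'h::ring_1 \<Rightarrow> 'h) \<Rightarrow> ('h \<Rightarrow> ('h \<times> 'h) list) \<Rightarrow> ('h \<Rightarrow> 'k) \<Rightarrow> ('h \<Rightarrow> 'h)
     \<Rightarrow> ('h \<Rightarrow> 'h) \<Rightarrow> ('h \<Rightarrow> 'h) \<Rightarrow> bool" where
  "rota_baxter_system sc D \<epsilon> S B1 B2 \<longleftrightarrow>
     hopf_algebra sc D \<epsilon> S \<and> cocommutative sc D \<and>
     coalg_hom sc D \<epsilon> B1 \<and> coalg_hom sc D \<epsilon> B2 \<and> B1 1 = 1 \<and> B2 1 = 1 \<and>
     (\<forall>a b. B1 a * B1 b = B1 (desc D S B1 B2 a b)) \<and>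
     (\<forall>a b. B2 a * B2 b = B2 (desc D S B1 B2 a b))"

definition nonunital_bialgebra ::
  "('k::field \<Rightarrow> 'h::ab_group_add \<Rightarrow> 'h) \<Rightarrow> ('h \<Rightarrow> ('h \<times> 'h) list) \<Rightarrow> ('h \<Rightarrow> 'k) \<Rightarrow> ('h \<Rightarrow> 'h \<Rightarrow> 'h) \<Rightarrow> bool" where
  "nonunital_bialgebra sc D \<epsilon> m \<longleftrightarrow>
     (\<forall>x. Vector_Spaces.linear sc sc (m x)) \<and> (\<forall>y. Vector_Spaces.linear sc sc (\<lambda>x. m x y)) \<and>
     (\<forall>x y z. m (m x y) z = m x (m y z)) \<and>
     (\<forall>x y. teq2 sc (D (m x y)) (tmul m (D x) (D y))) \<and>
     (\<forall>x y. \<epsilon> (m x y) = \<epsilon> x * \<epsilon> y)"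

definition hopf_truss ::
  "('k::field \<Rightarrow> 'h::ring_1 \<Rightarrow> 'h) \<Rightarrow> ('h \<Rightarrow> ('h \<times> 'h) list) \<Rightarrow> ('h \<Rightarrow> 'k) \<Rightarrow> ('h \<Rightarrow> 'h)
     \<Rightarrow> ('h \<Rightarrow> 'h \<Rightarrow> 'h) \<Rightarrow> ('h \<Rightarrow> 'h) \<Rightarrow> bool" where
  "hopf_truss sc D \<epsilon> S m \<sigma> \<longleftrightarrow>
     hopf_algebra sc D \<epsilon> S \<and> nonunital_bialgebra sc D \<epsilon> m \<and> coalg_hom sc D \<epsilon> \<sigma> \<and>
     (\<forall>a b c. m a (b * c) = sw3 (comul2_left D a) (\<lambda>x y z. m x b * S (\<sigma> y) * m z c))"

end

theory Submission
  imports Defs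
begin

text \<open>
Write a \<diamond> b = B1(a_1) b S(B2(a_2)).  Since B1, B2 and (by cocommutativity) S are coalgebra maps,
a \<diamond> b is built from coalgebra maps applied to Sweedler components, so \<diamond> is multiplicative for
the comultiplication.  Then (a \<diamond> b) \<diamond> c = B1(a_1 \<diamond> b_1) c S(B2(a_2 \<diamond> b_2)), and the
Rota-Baxter identities B_i(x) B_i(y) = B_i(x \<diamond> y) together with S(xy) = S(y) S(x) turn this into
a \<diamond> (b \<diamond> c).  The cocycle \<sigma>(a) = a \<diamond> 1 is a coalgebra map as well.

The truss law is an identity in the convolution algebra of linear endomorphisms of H: S \<sigma> is the
convolution inverse of \<sigma> = B1 * S B2, i.e. S \<sigma> = B2 * S B1, hence
(a_1 \<diamond> b) S(\<sigma>(a_2)) (a_3 \<diamond> c) = B1(a_1) b S(B2(a_2)) B2(a_3) S(B1(a_4)) B1(a_5) c S(B2(a_6)),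
and the factors S B1 * B1 and S B2 * B2 collapse to the counit, leaving a \<diamond> (b c).

Tensors are only accessible through scalar-valued multilinear forms; every tensor identity is
transported to vector-valued multilinear maps by separating points with linear functionals.
\<close>

section \<open>Multilinear maps and Sweedler sums\<close>

lemma vector_space_field_mult: "vector_space ((*) :: 'k::field \<Rightarrow> 'k \<Rightarrow> 'k)"
  by unfold_locales (auto simp: algebra_simps)

lemma linear_add: "Vector_Spaces.linear s1 s2 f \<Longrightarrow> f (x + y) = f x + f y"
  by (simp add: Vector_Spaces.linear_iff)

lemma linear_scale: "Vector_Spaces.linear s1 s2 f \<Longrightarrow> f (s1 c x) = s2 c (f x)"
  by (simp add: Vector_Spaces.linear_iff)

lemma linear_zero: "Vector_Spaces.linear s1 s2 f \<Longrightarrow> f 0 = 0"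
  by (metis add_cancel_right_right linear_add)

lemma linearI:
  "vector_space s1 \<Longrightarrow> vector_space s2 \<Longrightarrow> (\<And>x y. f (x + y) = f x + f y)
    \<Longrightarrow> (\<And>c x. f (s1 c x) = s2 c (f x)) \<Longrightarrow> Vector_Spaces.linear s1 s2 f"
  by (simp add: Vector_Spaces.linear_iff)

lemma linear_comp:
  "Vector_Spaces.linear s1 s2 f \<Longrightarrow> Vector_Spaces.linear s2 s3 g
    \<Longrightarrow> Vector_Spaces.linear s1 s3 (\<lambda>x. g (f x))"
  using Vector_Spaces.linear_compose[of s1 s2 f s3 g] by (simp add: comp_def)

lemma linear_scale_const: "vector_space s \<Longrightarrow> Vector_Spaces.linear s s (s c)"
  by (auto intro!: linearI simp: vector_space.vector_space_assms mult.commute)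

lemma eq_if_linear_functionals_eq:
  fixes s :: "'k::field \<Rightarrow> 'v::ab_group_add \<Rightarrow> 'v"
  assumes "vector_space s" and eq: "\<And>\<phi>. Vector_Spaces.linear s (*) \<phi> \<Longrightarrow> \<phi> a = \<phi> b"
  shows "a = b"
proof (rule ccontr)
  assume "a \<noteq> b"
  interpret vector_space_pair s "(*) :: 'k \<Rightarrow> 'k \<Rightarrow> 'k"
    using assms(1) vector_space_field_mult by (simp add: vector_space_pair_def)
  have "vs1.independent {a - b}"
    using \<open>a \<noteq> b\<close> by (simp add: vs1.independent_insert vs1.span_empty)
  then obtain \<phi> where \<phi>: "Vector_Spaces.linear s (*) \<phi>" and "\<phi> (a - b) = 1"
    using linear_independent_extend[of "{a - b}" "\<lambda>_. 1"] by auto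
  moreover have "\<phi> (a - b) = \<phi> a - \<phi> b"
    using linear_add[OF \<phi>, of "a - b" b] by simp
  ultimately show False
    using eq[OF \<phi>] by simp
qed

lemma sw2_Nil [simp]: "sw2 [] F = 0"
  by (simp add: sw2_def)

lemma sw2_Cons [simp]: "sw2 (p # T) F = F (fst p) (snd p) + sw2 T F"
  by (simp add: sw2_def split: prod.split)

lemma sw2_append [simp]: "sw2 (T @ T') F = sw2 T F + sw2 T' F"
  by (simp add: sw2_def)

lemma sw3_Nil [simp]: "sw3 [] F = 0"
  by (simp add: sw3_def)

lemma sw3_Cons [simp]: "sw3 (p # T) F = F (fst p) (fst (snd p)) (snd (snd p)) + sw3 T F"
  by (simp add: sw3_def split: prod.split)

lemma sw3_append [simp]: "sw3 (T @ T') F = sw3 T F + sw3 T' F"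
  by (simp add: sw3_def)

lemma sw2_cong:
  assumes "\<And>x y. F x y = G x y"
  shows "sw2 T F = sw2 T G"
proof -
  have "F = G"
    using assms by (intro ext)
  then show ?thesis
    by simp
qed

lemma linear_sw2_commute:
  "Vector_Spaces.linear s1 s2 h \<Longrightarrow> h (sw2 T F) = sw2 T (\<lambda>x y. h (F x y))"
  by (induction T) (auto simp: linear_zero linear_add)

lemma linear_sw3_commute:
  "Vector_Spaces.linear s1 s2 h \<Longrightarrow> h (sw3 T F) = sw3 T (\<lambda>x y z. h (F x y z))"
  by (induction T) (auto simp: linear_zero linear_add)

lemma sw2_add: "sw2 T (\<lambda>x y. F x y + G x y) = sw2 T F + sw2 T G"
  by (induction T) (auto simp: algebra_simps)

lemma sw2_zero [simp]: "sw2 T (\<lambda>x y. 0) = 0"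
  by (induction T) auto

lemma sw2_commute:
  "sw2 T (\<lambda>a b. sw2 T' (\<lambda>c d. F a b c d)) = sw2 T' (\<lambda>c d. sw2 T (\<lambda>a b. F a b c d))"
  by (induction T) (auto simp: sw2_add)

lemma sw2_mult_left: "(c::'a::ring) * sw2 T F = sw2 T (\<lambda>x y. c * F x y)"
  by (induction T) (auto simp: algebra_simps)

lemma sw2_mult_right: "sw2 T F * (c::'a::ring) = sw2 T (\<lambda>x y. F x y * c)"
  by (induction T) (auto simp: algebra_simps)

lemma sw2_map_pair: "sw2 (map (\<lambda>(u, v). (f u, g v)) T) F = sw2 T (\<lambda>u v. F (f u) (g v))"
  by (induction T) auto

lemma sw2_map_swap: "sw2 (map (\<lambda>(u, v). (v, u)) T) F = sw2 T (\<lambda>u v. F v u)"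
  by (induction T) auto

lemma sw3_comul2_left: "sw3 (comul2_left D a) G = sw2 (D a) (\<lambda>x z. sw2 (D x) (\<lambda>u v. G u v z))"
proof -
  have "sw3 (map (\<lambda>(u, v). (u, v, z)) T) G = sw2 T (\<lambda>u v. G u v z)" for T z
    by (induction T) auto
  then have "sw3 (concat (map (\<lambda>(x, z). map (\<lambda>(u, v). (u, v, z)) (D x)) T)) G
      = sw2 T (\<lambda>x z. sw2 (D x) (\<lambda>u v. G u v z))" for T
    by (induction T) (auto split: prod.split)
  then show ?thesis
    unfolding comul2_left_def by blast
qed

lemma sw3_comul2_right: "sw3 (comul2_right D a) G = sw2 (D a) (\<lambda>x y. sw2 (D y) (\<lambda>u v. G x u v))"
proof -
  have "sw3 (map (\<lambda>(u, v). (x, u, v)) T) G = sw2 T (\<lambda>u v. G x u v)" for T x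
    by (induction T) auto
  then have "sw3 (concat (map (\<lambda>(x, y). map (\<lambda>(u, v). (x, u, v)) (D y)) T)) G
      = sw2 T (\<lambda>x y. sw2 (D y) (\<lambda>u v. G x u v))" for T
    by (induction T) (auto split: prod.split)
  then show ?thesis
    unfolding comul2_right_def by blast
qed

lemma sw2_tmul: "sw2 (tmul m T T') F = sw2 T (\<lambda>u v. sw2 T' (\<lambda>u' v'. F (m u u') (m v v')))"
proof -
  have "sw2 (map (\<lambda>(u', v'). (m u u', m v v')) T') F = sw2 T' (\<lambda>u' v'. F (m u u') (m v v'))"
    for u v
    by (induction T') auto
  then show ?thesis
    unfolding tmul_def by (induction T) (auto split: prod.split)
qed

lemma linear_sw2:
  assumes "vector_space s1" "vector_space s2" and G: "\<And>u v. Vector_Spaces.linear s1 s2 (G u v)"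
  shows "Vector_Spaces.linear s1 s2 (\<lambda>z. sw2 T (\<lambda>u v. G u v z))"
proof (rule linearI[OF assms(1,2)])
  fix x y
  show "sw2 T (\<lambda>u v. G u v (x + y)) = sw2 T (\<lambda>u v. G u v x) + sw2 T (\<lambda>u v. G u v y)"
    by (simp add: linear_add[OF G] sw2_add)
next
  fix c x
  have "s2 c (sw2 T (\<lambda>u v. G u v x)) = sw2 T (\<lambda>u v. s2 c (G u v x))"
    by (rule linear_sw2_commute[OF linear_scale_const[OF assms(2)]])
  then show "sw2 T (\<lambda>u v. G u v (s1 c x)) = s2 c (sw2 T (\<lambda>u v. G u v x))"
    by (simp add: linear_scale[OF G])
qed

definition bilinear_map ::
  "('k::field \<Rightarrow> 'h::ab_group_add \<Rightarrow> 'h) \<Rightarrow> ('k \<Rightarrow> 'v::ab_group_add \<Rightarrow> 'v) \<Rightarrow> ('h \<Rightarrow> 'h \<Rightarrow> 'v) \<Rightarrow> bool"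
  where "bilinear_map s1 s2 F \<longleftrightarrow>
    (\<forall>x. Vector_Spaces.linear s1 s2 (F x)) \<and> (\<forall>y. Vector_Spaces.linear s1 s2 (\<lambda>x. F x y))"

definition trilinear_map ::
  "('k::field \<Rightarrow> 'h::ab_group_add \<Rightarrow> 'h) \<Rightarrow> ('k \<Rightarrow> 'v::ab_group_add \<Rightarrow> 'v)
    \<Rightarrow> ('h \<Rightarrow> 'h \<Rightarrow> 'h \<Rightarrow> 'v) \<Rightarrow> bool"
  where "trilinear_map s1 s2 G \<longleftrightarrow>
    (\<forall>y z. Vector_Spaces.linear s1 s2 (\<lambda>x. G x y z)) \<and>
    (\<forall>x z. Vector_Spaces.linear s1 s2 (\<lambda>y. G x y z)) \<and>
    (\<forall>x y. Vector_Spaces.linear s1 s2 (\<lambda>z. G x y z))"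

lemma bilinear_mapI:
  "(\<And>x. Vector_Spaces.linear s1 s2 (\<lambda>y. F x y)) \<Longrightarrow> (\<And>y. Vector_Spaces.linear s1 s2 (\<lambda>x. F x y))
    \<Longrightarrow> bilinear_map s1 s2 F"
  by (simp add: bilinear_map_def)

lemma trilinear_mapI:
  "(\<And>y z. Vector_Spaces.linear s1 s2 (\<lambda>x. F x y z)) \<Longrightarrow> (\<And>x z. Vector_Spaces.linear s1 s2 (\<lambda>y. F x y z))
    \<Longrightarrow> (\<And>x y. Vector_Spaces.linear s1 s2 (\<lambda>z. F x y z)) \<Longrightarrow> trilinear_map s1 s2 F"
  by (simp add: trilinear_map_def)

lemma sw2_eq_if_teq2:
  assumes "vector_space s2" and "teq2 s1 T T'" and F: "bilinear_map s1 s2 F"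
  shows "sw2 T F = sw2 T' F"
proof (rule eq_if_linear_functionals_eq[OF assms(1)])
  fix \<phi> assume \<phi>: "Vector_Spaces.linear s2 (*) \<phi>"
  have "bilinear_form s1 (\<lambda>x y. \<phi> (F x y))"
    using F \<phi> unfolding bilinear_map_def bilinear_form_def by (auto intro: linear_comp)
  then have "sw2 T (\<lambda>x y. \<phi> (F x y)) = sw2 T' (\<lambda>x y. \<phi> (F x y))"
    using \<open>teq2 s1 T T'\<close> by (simp add: teq2_def)
  then show "\<phi> (sw2 T F) = \<phi> (sw2 T' F)"
    by (simp add: linear_sw2_commute[OF \<phi>])
qed

lemma sw3_eq_if_teq3:
  assumes "vector_space s2" and "teq3 s1 T T'" and G: "trilinear_map s1 s2 G"
  shows "sw3 T G = sw3 T' G"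
proof (rule eq_if_linear_functionals_eq[OF assms(1)])
  fix \<phi> assume \<phi>: "Vector_Spaces.linear s2 (*) \<phi>"
  have "trilinear_form s1 (\<lambda>x y z. \<phi> (G x y z))"
    using G unfolding trilinear_form_def trilinear_map_def by (auto intro: linear_comp[OF _ \<phi>])
  then have "sw3 T (\<lambda>x y z. \<phi> (G x y z)) = sw3 T' (\<lambda>x y z. \<phi> (G x y z))"
    using \<open>teq3 s1 T T'\<close> by (simp add: teq3_def)
  then show "\<phi> (sw3 T G) = \<phi> (sw3 T' G)"
    by (simp add: linear_sw3_commute[OF \<phi>])
qed

section \<open>Hopf algebras\<close>

locale hopf =
  fixes sc :: "'k::field \<Rightarrow> 'h::ring_1 \<Rightarrow> 'h"
    and D :: "'h \<Rightarrow> ('h \<times> 'h) list" and \<epsilon> :: "'h \<Rightarrow> 'k" and S :: "'h \<Rightarrow> 'h"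
  assumes hopf_algebra: "hopf_algebra sc D \<epsilon> S"
begin

lemma
  shows vector_space_sc: "vector_space sc"
    and scale_mult_left: "sc c (x * y) = sc c x * y"
    and scale_mult_right: "sc c (x * y) = x * sc c y"
    and linear_counit: "Vector_Spaces.linear sc (*) \<epsilon>"
    and comul_add: "teq2 sc (D (x + y)) (D x @ D y)"
    and comul_scale: "teq2 sc (D (sc c x)) (map (\<lambda>(u, v). (sc c u, v)) (D x))"
    and coassoc: "teq3 sc (comul2_left D x) (comul2_right D x)"
    and counit_left: "sw2 (D x) (\<lambda>u v. sc (\<epsilon> u) v) = x"
    and counit_right: "sw2 (D x) (\<lambda>u v. sc (\<epsilon> v) u) = x"
    and comul_mult: "teq2 sc (D (x * y)) (tmul (*) (D x) (D y))"
    and comul_one: "teq2 sc (D 1) [(1, 1)]"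
    and counit_mult: "\<epsilon> (x * y) = \<epsilon> x * \<epsilon> y"
    and counit_one: "\<epsilon> 1 = 1"
    and linear_antipode: "Vector_Spaces.linear sc sc S"
    and antipode_left: "sw2 (D x) (\<lambda>u v. S u * v) = sc (\<epsilon> x) 1"
    and antipode_right: "sw2 (D x) (\<lambda>u v. u * S v) = sc (\<epsilon> x) 1"
  using hopf_algebra unfolding hopf_algebra_def by blast+

lemma scale_commute: "sc a (sc b v) = sc b (sc a v)"
  by (simp add: vector_space.vector_space_assms(3)[OF vector_space_sc] mult.commute)

lemma scale_one_mult: "sc a 1 * v = sc a v"
  by (simp add: scale_mult_left[symmetric])

lemma linear_ident: "Vector_Spaces.linear sc sc (\<lambda>x. x)"
  by (auto intro!: linearI vector_space_sc)

lemma linear_mult_right: "Vector_Spaces.linear sc sc f \<Longrightarrow> Vector_Spaces.linear sc sc (\<lambda>x. f x * c)"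
  by (rule linearI[OF vector_space_sc vector_space_sc])
    (auto simp: linear_add linear_scale distrib_right scale_mult_left)

lemma linear_mult_left: "Vector_Spaces.linear sc sc f \<Longrightarrow> Vector_Spaces.linear sc sc (\<lambda>x. c * f x)"
  by (rule linearI[OF vector_space_sc vector_space_sc])
    (auto simp: linear_add linear_scale distrib_left scale_mult_right)

lemma linear_comp_scale: "Vector_Spaces.linear sc sc f \<Longrightarrow> Vector_Spaces.linear sc sc (\<lambda>x. sc c (f x))"
  by (rule linear_comp[OF _ linear_scale_const[OF vector_space_sc]])

lemma linear_comp_antipode: "Vector_Spaces.linear sc sc f \<Longrightarrow> Vector_Spaces.linear sc sc (\<lambda>x. S (f x))"
  by (rule linear_comp[OF _ linear_antipode])

lemma linear_comp_counit: "Vector_Spaces.linear sc sc f \<Longrightarrow> Vector_Spaces.linear sc (*) (\<lambda>x. \<epsilon> (f x))"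
  by (rule linear_comp[OF _ linear_counit])

lemma linear_scale_by_functional:
  "vector_space s2 \<Longrightarrow> Vector_Spaces.linear sc (*) g \<Longrightarrow> Vector_Spaces.linear sc s2 (\<lambda>x. s2 (g x) v)"
  by (rule linearI[OF vector_space_sc]) (auto simp: linear_add linear_scale vector_space.vector_space_assms)

lemma bilinear_map_comp_left:
  "bilinear_map sc s2 F \<Longrightarrow> Vector_Spaces.linear sc sc f \<Longrightarrow> Vector_Spaces.linear sc s2 (\<lambda>x. F (f x) y)"
  by (rule linear_comp[of sc sc f s2 "\<lambda>x. F x y"]) (auto simp: bilinear_map_def)

lemma bilinear_map_comp_right:
  "bilinear_map sc s2 F \<Longrightarrow> Vector_Spaces.linear sc sc f \<Longrightarrow> Vector_Spaces.linear sc s2 (\<lambda>x. F y (f x))"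
  by (rule linear_comp[of sc sc f s2 "F y"]) (auto simp: bilinear_map_def)

lemma linear_sw2_comul:
  assumes s2: "vector_space s2" and F: "bilinear_map sc s2 F"
  shows "Vector_Spaces.linear sc s2 (\<lambda>x. sw2 (D x) F)"
proof (rule linearI[OF vector_space_sc s2])
  fix x y
  show "sw2 (D (x + y)) F = sw2 (D x) F + sw2 (D y) F"
    using sw2_eq_if_teq2[OF s2 comul_add F] by simp
next
  fix c x
  have "sw2 (D (sc c x)) F = sw2 (D x) (\<lambda>u v. F (sc c u) v)"
    using sw2_eq_if_teq2[OF s2 comul_scale F] sw2_map_pair[of "sc c" "\<lambda>v. v"] by simp
  also have "\<dots> = sw2 (D x) (\<lambda>u v. s2 c (F u v))"
    by (simp add: linear_scale[OF bilinear_map_comp_left[OF F linear_ident]])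
  also have "\<dots> = s2 c (sw2 (D x) F)"
    by (rule linear_sw2_commute[OF linear_scale_const[OF s2], symmetric])
  finally show "sw2 (D (sc c x)) F = s2 c (sw2 (D x) F)" .
qed

lemma linear_comp_sw2_comul:
  "vector_space s2 \<Longrightarrow> bilinear_map sc s2 F \<Longrightarrow> Vector_Spaces.linear sc sc f
    \<Longrightarrow> Vector_Spaces.linear sc s2 (\<lambda>x. sw2 (D (f x)) F)"
  by (rule linear_comp[OF _ linear_sw2_comul])

lemmas linear_sw2_param = linear_sw2[OF vector_space_sc]

lemmas linear_intros = vector_space_sc vector_space_field_mult linear_ident linear_mult_right
  linear_mult_left linear_comp_scale linear_comp_antipode linear_comp_counit linear_scale_by_functional
  linear_comp_sw2_comul linear_sw2_param bilinear_mapI trilinear_mapI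

lemma sw2_coassoc:
  assumes "vector_space s2" and "trilinear_map sc s2 G"
  shows "sw2 (D a) (\<lambda>x z. sw2 (D x) (\<lambda>u v. G u v z)) = sw2 (D a) (\<lambda>x y. sw2 (D y) (\<lambda>u v. G x u v))"
  using sw3_eq_if_teq3[OF assms(1) coassoc assms(2)] by (simp add: sw3_comul2_left sw3_comul2_right)

lemma sw2_counit_left:
  assumes h: "Vector_Spaces.linear sc s2 h"
  shows "sw2 (D a) (\<lambda>x y. s2 (\<epsilon> x) (h y)) = h a"
proof -
  have "h a = h (sw2 (D a) (\<lambda>u v. sc (\<epsilon> u) v))"
    by (simp add: counit_left)
  then show ?thesis
    by (simp add: linear_sw2_commute[OF h] linear_scale[OF h])
qed

lemma sw2_counit_right:
  assumes h: "Vector_Spaces.linear sc s2 h"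
  shows "sw2 (D a) (\<lambda>x y. s2 (\<epsilon> y) (h x)) = h a"
proof -
  have "h a = h (sw2 (D a) (\<lambda>u v. sc (\<epsilon> v) u))"
    by (simp add: counit_right)
  then show ?thesis
    by (simp add: linear_sw2_commute[OF h] linear_scale[OF h])
qed

lemma sw2_comul_mult:
  "vector_space s2 \<Longrightarrow> bilinear_map sc s2 F
    \<Longrightarrow> sw2 (D (x * y)) F = sw2 (D x) (\<lambda>a b. sw2 (D y) (\<lambda>c d. F (a * c) (b * d)))"
  using sw2_eq_if_teq2[OF _ comul_mult] by (simp add: sw2_tmul)

lemma sw2_comul_one: "vector_space s2 \<Longrightarrow> bilinear_map sc s2 F \<Longrightarrow> sw2 (D 1) F = F 1 1"
  using sw2_eq_if_teq2[OF _ comul_one] by simp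

lemma sw2_comul_coalg_hom:
  assumes "coalg_hom sc D \<epsilon> B" and "vector_space s2" and "bilinear_map sc s2 F"
  shows "sw2 (D (B x)) F = sw2 (D x) (\<lambda>u v. F (B u) (B v))"
  using assms sw2_eq_if_teq2[OF assms(2) _ assms(3), of "D (B x)" "map (\<lambda>(u, v). (B u, B v)) (D x)"]
  by (simp add: coalg_hom_def sw2_map_pair)

lemma sw2_comul_nested_reassoc:
  assumes s2: "vector_space s2"
    and "\<And>q r t. Vector_Spaces.linear sc s2 (\<lambda>p. \<Psi> p q r t)"
    and "\<And>p r t. Vector_Spaces.linear sc s2 (\<lambda>q. \<Psi> p q r t)"
    and "\<And>p q t. Vector_Spaces.linear sc s2 (\<lambda>r. \<Psi> p q r t)"
    and "\<And>p q r. Vector_Spaces.linear sc s2 (\<lambda>t. \<Psi> p q r t)"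
  shows "sw2 (D a) (\<lambda>x y. sw2 (D x) (\<lambda>p q. sw2 (D y) (\<lambda>r t. \<Psi> p q r t)))
       = sw2 (D a) (\<lambda>p y. sw2 (D y) (\<lambda>m t. sw2 (D m) (\<lambda>q r. \<Psi> p q r t)))"
proof -
  have "sw2 (D a) (\<lambda>x y. sw2 (D x) (\<lambda>p q. sw2 (D y) (\<lambda>r t. \<Psi> p q r t)))
      = sw2 (D a) (\<lambda>p y. sw2 (D y) (\<lambda>q w. sw2 (D w) (\<lambda>r t. \<Psi> p q r t)))"
    by (rule sw2_coassoc[OF s2]) (auto intro!: linear_intros s2 assms(2-5))
  also have "\<dots> = sw2 (D a) (\<lambda>p y. sw2 (D y) (\<lambda>m t. sw2 (D m) (\<lambda>q r. \<Psi> p q r t)))"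
    by (intro sw2_cong sw2_coassoc[OF s2, symmetric]) (auto intro!: linear_intros s2 assms(2-5))
  finally show ?thesis .
qed

lemma counit_antipode: "\<epsilon> (S x) = \<epsilon> x"
proof -
  have "\<epsilon> (sw2 (D x) (\<lambda>u v. S u * v)) = sw2 (D x) (\<lambda>u v. \<epsilon> v * \<epsilon> (S u))"
    by (simp add: linear_sw2_commute[OF linear_counit] counit_mult mult.commute)
  also have "\<dots> = \<epsilon> (S x)"
    by (rule sw2_counit_right) (auto intro!: linear_intros)
  finally show ?thesis
    by (simp add: antipode_left linear_scale[OF linear_counit] counit_one)
qed

lemma sw2_antipode_right_contract:
  assumes h: "Vector_Spaces.linear sc s2 h"
  shows "sw2 (D x) (\<lambda>p r. h (P * p * S r)) = s2 (\<epsilon> x) (h P)"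
proof -
  have "sw2 (D x) (\<lambda>p r. h (P * p * S r)) = h (P * sw2 (D x) (\<lambda>p r. p * S r))"
    by (simp add: linear_sw2_commute[OF linear_comp[OF linear_mult_left[OF linear_ident] h]] mult.assoc)
  also have "\<dots> = h (sc (\<epsilon> x) P)"
    by (simp add: antipode_right scale_mult_right[symmetric])
  finally show ?thesis
    by (simp add: linear_scale[OF h])
qed

text \<open>The anti-multiplicativity of S follows the usual computation
  S(xy) = S(x_1 y_1) x_2 y_2 S(y_3) S(x_3) = S(y) S(x).\<close>

lemma counit_pair_as_antipodes:
  "sc (\<epsilon> x) (sc (\<epsilon> y) 1) = sw2 (D x) (\<lambda>p q. sw2 (D y) (\<lambda>r t. p * (r * S t) * S q))"
proof -
  have "sw2 (D y) (\<lambda>r t. p * (r * S t) * S q) = sc (\<epsilon> y) (p * S q)" for p q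
    by (simp add: sw2_mult_left[symmetric] sw2_mult_right[symmetric] antipode_right
        scale_mult_left scale_mult_right[symmetric])
  then have "sw2 (D x) (\<lambda>p q. sw2 (D y) (\<lambda>r t. p * (r * S t) * S q)) = sc (\<epsilon> y) (sc (\<epsilon> x) 1)"
    by (simp add: linear_sw2_commute[OF linear_scale_const[OF vector_space_sc], symmetric] antipode_right)
  then show ?thesis
    by (simp add: scale_commute)
qed

lemma antipode_mult_contract:
  "sw2 (D z) (\<lambda>x1 p. sw2 (D w) (\<lambda>y1 r. S (x1 * y1) * (p * r) * c)) = sc (\<epsilon> z) (sc (\<epsilon> w) c)"
proof -
  have "sw2 (D z) (\<lambda>x1 p. sw2 (D w) (\<lambda>y1 r. S (x1 * y1) * (p * r) * c))
      = sw2 (D (z * w)) (\<lambda>u v. S u * v * c)"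
    by (rule sw2_comul_mult[OF vector_space_sc, symmetric]) (auto intro!: linear_intros)
  also have "\<dots> = sc (\<epsilon> z) (sc (\<epsilon> w) c)"
    by (simp add: sw2_mult_right[symmetric] antipode_left counit_mult scale_one_mult
        vector_space.vector_space_assms(3)[OF vector_space_sc])
  finally show ?thesis .
qed

lemma antipode_mult: "S (x * y) = S y * S x"
proof -
  let ?\<Phi> = "\<lambda>x1 y1 p q r t. S (x1 * y1) * (p * (r * S t) * S q)"
  have S_counit: "S (x * y) = sw2 (D x) (\<lambda>x1 x2. sw2 (D y) (\<lambda>y1 y2. S (x1 * y1) * sc (\<epsilon> x2) (sc (\<epsilon> y2) 1)))"
  proof -
    have "sw2 (D y) (\<lambda>y1 y2. S (x1 * y1) * sc (\<epsilon> x2) (sc (\<epsilon> y2) 1)) = sc (\<epsilon> x2) (S (x1 * y))" for x1 x2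
    proof -
      have "sw2 (D y) (\<lambda>y1 y2. S (x1 * y1) * sc (\<epsilon> x2) (sc (\<epsilon> y2) 1))
          = sc (\<epsilon> x2) (sw2 (D y) (\<lambda>y1 y2. sc (\<epsilon> y2) (S (x1 * y1))))"
        by (simp add: linear_sw2_commute[OF linear_scale_const[OF vector_space_sc]]
            scale_mult_right[symmetric] scale_commute)
      also have "sw2 (D y) (\<lambda>y1 y2. sc (\<epsilon> y2) (S (x1 * y1))) = S (x1 * y)"
        by (rule sw2_counit_right) (auto intro!: linear_intros)
      finally show ?thesis .
    qed
    moreover have "sw2 (D x) (\<lambda>x1 x2. sc (\<epsilon> x2) (S (x1 * y))) = S (x * y)"
      by (rule sw2_counit_right) (auto intro!: linear_intros)
    ultimately show ?thesis
      by simp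
  qed
  also have "\<dots> = sw2 (D x) (\<lambda>x1 x2. sw2 (D y) (\<lambda>y1 y2. sw2 (D x2) (\<lambda>p q. sw2 (D y2) (\<lambda>r t. ?\<Phi> x1 y1 p q r t))))"
    by (simp add: counit_pair_as_antipodes sw2_mult_left)
  also have "\<dots> = sw2 (D x) (\<lambda>x1 x2. sw2 (D x2) (\<lambda>p q. sw2 (D y) (\<lambda>y1 y2. sw2 (D y2) (\<lambda>r t. ?\<Phi> x1 y1 p q r t))))"
    by (rule sw2_cong, rule sw2_commute)
  also have "\<dots> = sw2 (D x) (\<lambda>z q. sw2 (D z) (\<lambda>x1 p. sw2 (D y) (\<lambda>y1 y2. sw2 (D y2) (\<lambda>r t. ?\<Phi> x1 y1 p q r t))))"
    by (rule sw2_coassoc[OF vector_space_sc, symmetric]) (auto intro!: linear_intros)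
  also have "\<dots> = sw2 (D x) (\<lambda>z q. sw2 (D z) (\<lambda>x1 p. sw2 (D y) (\<lambda>w t. sw2 (D w) (\<lambda>y1 r. ?\<Phi> x1 y1 p q r t))))"
    by (intro sw2_cong sw2_coassoc[OF vector_space_sc, symmetric]) (auto intro!: linear_intros)
  also have "\<dots> = sw2 (D x) (\<lambda>z q. sw2 (D y) (\<lambda>w t. sw2 (D z) (\<lambda>x1 p. sw2 (D w) (\<lambda>y1 r. ?\<Phi> x1 y1 p q r t))))"
    by (rule sw2_cong, rule sw2_commute)
  also have "\<dots> = sw2 (D x) (\<lambda>z q. sw2 (D y) (\<lambda>w t. sc (\<epsilon> z) (sc (\<epsilon> w) (S t * S q))))"
    using antipode_mult_contract by (simp add: mult.assoc)
  also have "\<dots> = sw2 (D x) (\<lambda>z q. sc (\<epsilon> z) (S y * S q))"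
  proof -
    have "sw2 (D y) (\<lambda>w t. sc (\<epsilon> w) (S t * S q)) = S y * S q" for q
      by (rule sw2_counit_left) (auto intro!: linear_intros)
    then show ?thesis
      by (simp add: linear_sw2_commute[OF linear_scale_const[OF vector_space_sc], symmetric])
  qed
  also have "\<dots> = S y * S x"
    by (rule sw2_counit_left) (auto intro!: linear_intros)
  finally show ?thesis .
qed

definition convolution :: "('h \<Rightarrow> 'h) \<Rightarrow> ('h \<Rightarrow> 'h) \<Rightarrow> 'h \<Rightarrow> 'h"
  where "convolution f g x = sw2 (D x) (\<lambda>u v. f u * g v)"

definition conv_unit :: "'h \<Rightarrow> 'h"
  where "conv_unit x = sc (\<epsilon> x) 1"

lemma linear_convolution:
  "Vector_Spaces.linear sc sc f \<Longrightarrow> Vector_Spaces.linear sc sc g \<Longrightarrow> Vector_Spaces.linear sc sc (convolution f g)"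
  unfolding convolution_def by (auto intro!: linear_intros intro: linear_comp)

lemma convolution_assoc:
  assumes "Vector_Spaces.linear sc sc f" "Vector_Spaces.linear sc sc g" "Vector_Spaces.linear sc sc h"
  shows "convolution (convolution f g) h = convolution f (convolution g h)"
proof
  fix x
  have "convolution (convolution f g) h x = sw2 (D x) (\<lambda>w z. sw2 (D w) (\<lambda>u v. f u * g v * h z))"
    by (simp add: convolution_def sw2_mult_right)
  also have "\<dots> = sw2 (D x) (\<lambda>u y. sw2 (D y) (\<lambda>v z. f u * g v * h z))"
    by (rule sw2_coassoc[OF vector_space_sc]) (auto intro!: linear_intros intro: linear_comp assms)
  also have "\<dots> = convolution f (convolution g h) x"
    by (simp add: convolution_def sw2_mult_left mult.assoc)
  finally show "convolution (convolution f g) h x = convolution f (convolution g h) x" .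
qed

lemma convolution_unit_left:
  assumes "Vector_Spaces.linear sc sc f"
  shows "convolution conv_unit f = f"
proof
  fix x
  show "convolution conv_unit f x = f x"
    using sw2_counit_left[OF assms] by (simp add: convolution_def conv_unit_def scale_one_mult)
qed

lemma convolution_unit_right:
  assumes "Vector_Spaces.linear sc sc f"
  shows "convolution f conv_unit = f"
proof
  fix x
  show "convolution f conv_unit x = f x"
    using sw2_counit_right[OF assms] by (simp add: convolution_def conv_unit_def scale_mult_right[symmetric])
qed

lemma convolution_unit_mult_left:
  assumes "Vector_Spaces.linear sc sc f"
  shows "convolution (\<lambda>x. conv_unit x * c) f = (\<lambda>x. c * f x)"
proof
  fix x
  show "convolution (\<lambda>x. conv_unit x * c) f x = c * f x"
    using sw2_counit_left[OF linear_mult_left[OF assms, of c], of x]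
    by (simp add: convolution_def conv_unit_def scale_one_mult scale_mult_left[symmetric])
qed

lemma convolution_mult_right: "convolution f (\<lambda>x. g x * c) = (\<lambda>x. convolution f g x * c)"
  by (auto simp: convolution_def sw2_mult_right mult.assoc)

lemma convolution_antipode_left:
  assumes "coalg_hom sc D \<epsilon> B"
  shows "convolution (\<lambda>x. S (B x)) B = conv_unit"
proof
  fix x
  have "convolution (\<lambda>x. S (B x)) B x = sw2 (D (B x)) (\<lambda>u v. S u * v)"
    unfolding convolution_def by (rule sw2_comul_coalg_hom[OF assms vector_space_sc, symmetric])
      (auto intro!: linear_intros)
  then show "convolution (\<lambda>x. S (B x)) B x = conv_unit x"
    using assms by (simp add: antipode_left conv_unit_def coalg_hom_def)
qed

lemma convolution_antipode_right:
  assumes "coalg_hom sc D \<epsilon> B"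
  shows "convolution B (\<lambda>x. S (B x)) = conv_unit"
proof
  fix x
  have "convolution B (\<lambda>x. S (B x)) x = sw2 (D (B x)) (\<lambda>u v. u * S v)"
    unfolding convolution_def by (rule sw2_comul_coalg_hom[OF assms vector_space_sc, symmetric])
      (auto intro!: linear_intros)
  then show "convolution B (\<lambda>x. S (B x)) x = conv_unit x"
    using assms by (simp add: antipode_right conv_unit_def coalg_hom_def)
qed

end

section \<open>Cocommutative Hopf algebras\<close>

locale cocomm_hopf = hopf +
  assumes cocommutative: "cocommutative sc D"
begin

lemma sw2_cocomm:
  assumes "vector_space s2" and "bilinear_map sc s2 F"
  shows "sw2 (D a) F = sw2 (D a) (\<lambda>x y. F y x)"
proof -
  have "teq2 sc (D a) (map (\<lambda>(u, v). (v, u)) (D a))"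
    using cocommutative by (simp add: cocommutative_def)
  from sw2_eq_if_teq2[OF assms(1) this assms(2)] show ?thesis
    by (simp add: sw2_map_swap)
qed

text \<open>In Sweedler notation: the middle factors of a_1 \<otimes> a_2 \<otimes> a_3 \<otimes> a_4 may be exchanged.\<close>

lemma sw2_comul_interchange:
  assumes s2: "vector_space s2"
    and l1: "\<And>q r t. Vector_Spaces.linear sc s2 (\<lambda>p. \<Psi> p q r t)"
    and l2: "\<And>p r t. Vector_Spaces.linear sc s2 (\<lambda>q. \<Psi> p q r t)"
    and l3: "\<And>p q t. Vector_Spaces.linear sc s2 (\<lambda>r. \<Psi> p q r t)"
    and l4: "\<And>p q r. Vector_Spaces.linear sc s2 (\<lambda>t. \<Psi> p q r t)"
  shows "sw2 (D a) (\<lambda>x y. sw2 (D x) (\<lambda>p q. sw2 (D y) (\<lambda>r t. \<Psi> p q r t)))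
       = sw2 (D a) (\<lambda>x y. sw2 (D x) (\<lambda>p r. sw2 (D y) (\<lambda>q t. \<Psi> p q r t)))"
proof -
  have swapped: "sw2 (D a) (\<lambda>x y. sw2 (D x) (\<lambda>p q. sw2 (D y) (\<lambda>r t. \<Psi> p r q t)))
       = sw2 (D a) (\<lambda>p y. sw2 (D y) (\<lambda>m t. sw2 (D m) (\<lambda>q r. \<Psi> p r q t)))"
    by (rule sw2_comul_nested_reassoc[OF s2]) (auto intro: l1 l2 l3 l4)
  have "sw2 (D m) (\<lambda>q r. \<Psi> p r q t) = sw2 (D m) (\<lambda>q r. \<Psi> p q r t)" for p m t
    by (rule sw2_cocomm[OF s2, symmetric]) (auto intro!: linear_intros l2 l3)
  then show ?thesis
    using sw2_comul_nested_reassoc[OF s2 l1 l2 l3 l4, of a] swapped by simp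
qed

lemma sw2_antipode_contract_pair:
  assumes s2: "vector_space s2" and F: "bilinear_map sc s2 F"
  shows "sw2 (D b) (\<lambda>b1 b2. sw2 (D b1) (\<lambda>c d. sw2 (D b2) (\<lambda>e f. F (P * c * S e) (Q * d * S f))))
    = s2 (\<epsilon> b) (F P Q)"
proof -
  note F_left = bilinear_map_comp_left[OF F] and F_right = bilinear_map_comp_right[OF F]
  have "sw2 (D b) (\<lambda>b1 b2. sw2 (D b1) (\<lambda>c d. sw2 (D b2) (\<lambda>e f. F (P * c * S e) (Q * d * S f))))
      = sw2 (D b) (\<lambda>x y. sw2 (D x) (\<lambda>p r. sw2 (D y) (\<lambda>q t. F (P * p * S r) (Q * q * S t))))"
    by (rule sw2_comul_interchange[OF s2, where \<Psi> = "\<lambda>p q r t. F (P * p * S r) (Q * q * S t)"])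
      (rule F_left F_right, (rule linear_mult_right linear_mult_left linear_comp_antipode linear_ident)+)+
  also have "\<dots> = sw2 (D b) (\<lambda>x y. sw2 (D y) (\<lambda>q t. sw2 (D x) (\<lambda>p r. F (P * p * S r) (Q * q * S t))))"
    by (rule sw2_cong, rule sw2_commute)
  also have "\<dots> = sw2 (D b) (\<lambda>x y. s2 (\<epsilon> x) (s2 (\<epsilon> y) (F P Q)))"
    by (simp add: sw2_antipode_right_contract[OF F_left[OF linear_ident]]
        linear_sw2_commute[OF linear_scale_const[OF s2], symmetric]
        sw2_antipode_right_contract[OF F_right[OF linear_ident]])
  also have "\<dots> = s2 (\<epsilon> b) (F P Q)"
    by (rule sw2_counit_left) (auto intro!: linear_intros s2)
  finally show ?thesis .
qed

text \<open>The proof expands F(S(x)_1, S(x)_2) to F(S(x_1)_1 x_2 S(x_4), S(x_1)_2 x_3 S(x_5)); as \<Delta> is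
  multiplicative, S(x_1) x_2 then collapses to \<epsilon>(x_1).\<close>

lemma sw2_comul_antipode:
  assumes s2: "vector_space s2" and F: "bilinear_map sc s2 F"
  shows "sw2 (D (S x)) F = sw2 (D x) (\<lambda>u v. F (S u) (S v))"
proof -
  note F_left = bilinear_map_comp_left[OF F] and F_right = bilinear_map_comp_right[OF F]
  define K where "K b2 U V = sw2 (D b2) (\<lambda>e f. F (U * S e) (V * S f))" for b2 U V
  have K: "bilinear_map sc s2 (K b2)" for b2
    unfolding K_def by (auto intro!: linear_intros s2 F_left F_right)
  have "sw2 (D (S x)) F = sw2 (D x) (\<lambda>a b. s2 (\<epsilon> b) (sw2 (D (S a)) F))"
    by (rule sw2_counit_right[symmetric]) (auto intro!: linear_intros s2 F)
  also have "\<dots> = sw2 (D x) (\<lambda>a b. sw2 (D (S a)) (\<lambda>P Q. s2 (\<epsilon> b) (F P Q)))"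
    by (simp add: linear_sw2_commute[OF linear_scale_const[OF s2]])
  also have "\<dots> = sw2 (D x) (\<lambda>a b. sw2 (D (S a)) (\<lambda>P Q. sw2 (D b) (\<lambda>b1 b2.
      sw2 (D b1) (\<lambda>c d. sw2 (D b2) (\<lambda>e f. F (P * c * S e) (Q * d * S f))))))"
    by (simp only: sw2_antipode_contract_pair[OF s2 F])
  also have "\<dots> = sw2 (D x) (\<lambda>a b. sw2 (D b) (\<lambda>b1 b2. sw2 (D (S a)) (\<lambda>P Q.
      sw2 (D b1) (\<lambda>c d. sw2 (D b2) (\<lambda>e f. F (P * c * S e) (Q * d * S f))))))"
    by (rule sw2_cong, rule sw2_commute)
  also have "\<dots> = sw2 (D x) (\<lambda>y b2. sw2 (D y) (\<lambda>a b1. sw2 (D (S a)) (\<lambda>P Q.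
      sw2 (D b1) (\<lambda>c d. sw2 (D b2) (\<lambda>e f. F (P * c * S e) (Q * d * S f))))))"
    by (rule sw2_coassoc[OF s2, symmetric]) (auto intro!: linear_intros s2 F_left F_right)
  also have "\<dots> = sw2 (D x) (\<lambda>y b2. sw2 (D y) (\<lambda>a b1. sw2 (D (S a * b1)) (K b2)))"
    by (simp add: sw2_comul_mult[OF s2 K] K_def)
  also have "\<dots> = sw2 (D x) (\<lambda>y b2. sw2 (D (sw2 (D y) (\<lambda>a b1. S a * b1))) (K b2))"
    by (simp add: linear_sw2_commute[OF linear_sw2_comul[OF s2 K]])
  also have "\<dots> = sw2 (D x) (\<lambda>y b2. s2 (\<epsilon> y) (K b2 1 1))"
    by (simp add: antipode_left linear_scale[OF linear_sw2_comul[OF s2 K]] sw2_comul_one[OF s2 K])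
  also have "\<dots> = sw2 (D x) (\<lambda>u v. F (S u) (S v))"
    unfolding K_def mult_1_left by (rule sw2_counit_left) (auto intro!: linear_intros s2 F_left F_right)
  finally show ?thesis .
qed

lemma sw2_comul_antipode_coalg_hom:
  assumes B: "coalg_hom sc D \<epsilon> B" and s2: "vector_space s2" and F: "bilinear_map sc s2 F"
  shows "sw2 (D (S (B w))) F = sw2 (D w) (\<lambda>r t. F (S (B r)) (S (B t)))"
proof -
  have "sw2 (D (S (B w))) F = sw2 (D (B w)) (\<lambda>r t. F (S r) (S t))"
    by (rule sw2_comul_antipode[OF s2 F])
  also have "\<dots> = sw2 (D w) (\<lambda>r t. F (S (B r)) (S (B t)))"
    by (rule sw2_comul_coalg_hom[OF B s2])
      (auto intro!: linear_intros bilinear_map_comp_left[OF F] bilinear_map_comp_right[OF F])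
  finally show ?thesis .
qed

end

section \<open>Rota-Baxter systems\<close>

locale rota_baxter_sys = cocomm_hopf sc D \<epsilon> S
  for sc :: "'k::field \<Rightarrow> 'h::ring_1 \<Rightarrow> 'h" and D \<epsilon> S +
  fixes B1 B2 :: "'h \<Rightarrow> 'h"
  assumes coalg_hom_B1: "coalg_hom sc D \<epsilon> B1"
    and coalg_hom_B2: "coalg_hom sc D \<epsilon> B2"
    and rota_baxter_B1: "B1 a * B1 b = B1 (desc D S B1 B2 a b)"
    and rota_baxter_B2: "B2 a * B2 b = B2 (desc D S B1 B2 a b)"
begin

abbreviation desc_op :: "'h \<Rightarrow> 'h \<Rightarrow> 'h" (infixl \<open>\<diamond>\<close> 70)
  where "a \<diamond> b \<equiv> desc D S B1 B2 a b"

abbreviation \<sigma> :: "'h \<Rightarrow> 'h"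
  where "\<sigma> \<equiv> cocyc D S B1 B2"

lemma linear_comp_B1: "Vector_Spaces.linear sc sc f \<Longrightarrow> Vector_Spaces.linear sc sc (\<lambda>x. B1 (f x))"
  using coalg_hom_B1 by (auto simp: coalg_hom_def intro: linear_comp)

lemma linear_comp_B2: "Vector_Spaces.linear sc sc f \<Longrightarrow> Vector_Spaces.linear sc sc (\<lambda>x. B2 (f x))"
  using coalg_hom_B2 by (auto simp: coalg_hom_def intro: linear_comp)

lemmas linear_rb_intros = linear_intros linear_comp_B1 linear_comp_B2

lemma linear_B1: "Vector_Spaces.linear sc sc B1"
  using linear_comp_B1[OF linear_ident] by simp

lemma linear_B2: "Vector_Spaces.linear sc sc B2"
  using linear_comp_B2[OF linear_ident] by simp

lemma linear_desc_left: "Vector_Spaces.linear sc sc (\<lambda>a. a \<diamond> b)"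
  unfolding desc_def by (auto intro!: linear_rb_intros)

lemma linear_desc_right: "Vector_Spaces.linear sc sc (\<lambda>b. a \<diamond> b)"
  unfolding desc_def by (auto intro!: linear_rb_intros)

lemma counit_desc: "\<epsilon> (a \<diamond> b) = \<epsilon> a * \<epsilon> b"
proof -
  have "\<epsilon> (a \<diamond> b) = sw2 (D a) (\<lambda>u v. \<epsilon> u * \<epsilon> b * \<epsilon> v)"
    using coalg_hom_B1 coalg_hom_B2
    by (simp add: desc_def coalg_hom_def linear_sw2_commute[OF linear_counit] counit_mult counit_antipode)
  also have "\<dots> = sw2 (D a) (\<lambda>u v. \<epsilon> u * \<epsilon> v * \<epsilon> b)"
    by (simp add: mult_ac)
  also have "\<dots> = sw2 (D a) (\<lambda>u v. \<epsilon> u * \<epsilon> v) * \<epsilon> b"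
    by (simp add: sw2_mult_right)
  also have "sw2 (D a) (\<lambda>u v. \<epsilon> u * \<epsilon> v) = \<epsilon> a"
    by (rule sw2_counit_left[OF linear_counit])
  finally show ?thesis .
qed

lemma sw2_comul_desc_summand:
  assumes s2: "vector_space s2" and F: "bilinear_map sc s2 F"
  shows "sw2 (D (B1 x * b * S (B2 y))) F
    = sw2 (D x) (\<lambda>p q. sw2 (D b) (\<lambda>c d. sw2 (D y) (\<lambda>r t. F (B1 p * c * S (B2 r)) (B1 q * d * S (B2 t)))))"
proof -
  note F_left = bilinear_map_comp_left[OF F] and F_right = bilinear_map_comp_right[OF F]
  have antipode_B2: "sw2 (D (S (B2 y))) (\<lambda>r t. F (P * r) (Q * t))
      = sw2 (D y) (\<lambda>r t. F (P * S (B2 r)) (Q * S (B2 t)))" for P Q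
    by (rule sw2_comul_antipode_coalg_hom[OF coalg_hom_B2 s2]) (auto intro!: linear_intros s2 F_left F_right)
  have "sw2 (D (B1 x * b * S (B2 y))) F
      = sw2 (D (B1 x * b)) (\<lambda>P Q. sw2 (D (S (B2 y))) (\<lambda>r t. F (P * r) (Q * t)))"
    by (rule sw2_comul_mult[OF s2 F])
  also have "\<dots> = sw2 (D (B1 x)) (\<lambda>p q. sw2 (D b) (\<lambda>c d.
      sw2 (D (S (B2 y))) (\<lambda>r t. F (p * c * r) (q * d * t))))"
    by (rule sw2_comul_mult[OF s2]) (auto intro!: linear_intros s2 F_left F_right)
  also have "\<dots> = sw2 (D x) (\<lambda>p q. sw2 (D b) (\<lambda>c d.
      sw2 (D (S (B2 y))) (\<lambda>r t. F (B1 p * c * r) (B1 q * d * t))))"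
    by (rule sw2_comul_coalg_hom[OF coalg_hom_B1 s2]) (auto intro!: linear_intros s2 F_left F_right)
  finally show ?thesis
    by (simp add: antipode_B2)
qed

lemma sw2_comul_desc:
  assumes s2: "vector_space s2" and F: "bilinear_map sc s2 F"
  shows "sw2 (D (a \<diamond> b)) F = sw2 (D a) (\<lambda>u v. sw2 (D b) (\<lambda>u' v'. F (u \<diamond> u') (v \<diamond> v')))"
proof -
  note F_left = bilinear_map_comp_left[OF F] and F_right = bilinear_map_comp_right[OF F]
  let ?\<Psi> = "\<lambda>c d p q r t. F (B1 p * c * S (B2 r)) (B1 q * d * S (B2 t))"
  have desc_pair: "F (x1 \<diamond> c) (x2 \<diamond> d) = sw2 (D x1) (\<lambda>p r. sw2 (D x2) (\<lambda>q t. ?\<Psi> c d p q r t))"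
    for x1 x2 c d
  proof -
    have "F (x1 \<diamond> c) (x2 \<diamond> d) = sw2 (D x1) (\<lambda>p r. F (B1 p * c * S (B2 r)) (x2 \<diamond> d))"
      unfolding desc_def[of D S B1 B2 x1] by (rule linear_sw2_commute[OF F_left[OF linear_ident]])
    also have "\<dots> = sw2 (D x1) (\<lambda>p r. sw2 (D x2) (\<lambda>q t. ?\<Psi> c d p q r t))"
      unfolding desc_def[of D S B1 B2 x2] by (simp only: linear_sw2_commute[OF F_right[OF linear_ident]])
    finally show ?thesis .
  qed
  have "sw2 (D (a \<diamond> b)) F = sw2 (D a) (\<lambda>x1 x2. sw2 (D (B1 x1 * b * S (B2 x2))) F)"
    unfolding desc_def by (rule linear_sw2_commute[OF linear_sw2_comul[OF s2 F]])
  also have "\<dots> = sw2 (D a) (\<lambda>x1 x2. sw2 (D b) (\<lambda>c d.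
      sw2 (D x1) (\<lambda>p q. sw2 (D x2) (\<lambda>r t. ?\<Psi> c d p q r t))))"
    by (simp add: sw2_comul_desc_summand[OF s2 F], rule sw2_cong, rule sw2_commute)
  also have "\<dots> = sw2 (D b) (\<lambda>c d. sw2 (D a) (\<lambda>x1 x2.
      sw2 (D x1) (\<lambda>p q. sw2 (D x2) (\<lambda>r t. ?\<Psi> c d p q r t))))"
    by (rule sw2_commute)
  also have "\<dots> = sw2 (D b) (\<lambda>c d. sw2 (D a) (\<lambda>x1 x2.
      sw2 (D x1) (\<lambda>p r. sw2 (D x2) (\<lambda>q t. ?\<Psi> c d p q r t))))"
    by (rule sw2_cong, rule sw2_comul_interchange[OF s2, where \<Psi> = "?\<Psi> c d" for c d])
      (rule F_left F_right, (rule linear_mult_right linear_mult_left linear_comp_antipode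
        linear_comp_B1 linear_comp_B2 linear_ident)+)+
  also have "\<dots> = sw2 (D a) (\<lambda>x1 x2. sw2 (D b) (\<lambda>c d.
      sw2 (D x1) (\<lambda>p r. sw2 (D x2) (\<lambda>q t. ?\<Psi> c d p q r t))))"
    by (rule sw2_commute)
  finally show ?thesis
    by (simp add: desc_pair)
qed

lemma comul_desc: "teq2 sc (D (a \<diamond> b)) (tmul (\<diamond>) (D a) (D b))"
  using sw2_comul_desc[OF vector_space_field_mult]
  by (simp add: teq2_def sw2_tmul bilinear_form_def bilinear_map_def)

lemma desc_assoc: "(a \<diamond> b) \<diamond> c = a \<diamond> (b \<diamond> c)"
proof -
  have "(a \<diamond> b) \<diamond> c = sw2 (D a) (\<lambda>u v. sw2 (D b) (\<lambda>u' v'. B1 (u \<diamond> u') * c * S (B2 (v \<diamond> v'))))"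
    unfolding desc_def[of D S B1 B2 "a \<diamond> b"]
    by (rule sw2_comul_desc[OF vector_space_sc]) (auto intro!: linear_rb_intros)
  also have "\<dots> = sw2 (D a) (\<lambda>u v. sw2 (D b) (\<lambda>u' v'. B1 u * B1 u' * c * (S (B2 v') * S (B2 v))))"
    by (simp add: rota_baxter_B1[symmetric] rota_baxter_B2[symmetric] antipode_mult)
  also have "\<dots> = a \<diamond> (b \<diamond> c)"
    unfolding desc_def by (simp add: sw2_mult_left sw2_mult_right mult.assoc)
  finally show ?thesis .
qed

lemma cocyc_eq_desc_one: "\<sigma> a = a \<diamond> 1"
  by (simp add: cocyc_def desc_def)

lemma coalg_hom_cocyc: "coalg_hom sc D \<epsilon> \<sigma>"
  unfolding coalg_hom_def cocyc_eq_desc_one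
proof (intro conjI allI)
  show "Vector_Spaces.linear sc sc (\<lambda>x. x \<diamond> 1)"
    by (rule linear_desc_left)
  fix x
  show "\<epsilon> (x \<diamond> 1) = \<epsilon> x"
    by (simp add: counit_desc counit_one)
  show "teq2 sc (D (x \<diamond> 1)) (map (\<lambda>(u, v). (u \<diamond> 1, v \<diamond> 1)) (D x))"
    unfolding teq2_def
  proof (intro allI impI)
    fix \<beta> :: "'h \<Rightarrow> 'h \<Rightarrow> 'k"
    assume "bilinear_form sc \<beta>"
    then have \<beta>: "bilinear_map sc (*) \<beta>"
      by (simp add: bilinear_form_def bilinear_map_def)
    have "sw2 (D 1) (\<lambda>u' v'. \<beta> (u \<diamond> u') (v \<diamond> v')) = \<beta> (u \<diamond> 1) (v \<diamond> 1)" for u v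
      by (rule sw2_comul_one[OF vector_space_field_mult])
        (auto intro!: linear_intros bilinear_map_comp_left[OF \<beta>] bilinear_map_comp_right[OF \<beta>]
          linear_desc_right)
    then show "sw2 (D (x \<diamond> 1)) \<beta> = sw2 (map (\<lambda>(u, v). (u \<diamond> 1, v \<diamond> 1)) (D x)) \<beta>"
      by (simp add: sw2_comul_desc[OF vector_space_field_mult \<beta>] sw2_map_pair)
  qed
qed

text \<open>Both sides are convolution inverses of the coalgebra map \<sigma> = B1 * S B2.\<close>

lemma antipode_cocyc: "(\<lambda>y. S (\<sigma> y)) = convolution B2 (\<lambda>x. S (B1 x))"
proof -
  have lin: "Vector_Spaces.linear sc sc \<sigma>" "Vector_Spaces.linear sc sc (\<lambda>y. S (\<sigma> y))"
    "Vector_Spaces.linear sc sc (\<lambda>x. S (B1 x))" "Vector_Spaces.linear sc sc (\<lambda>x. S (B2 x))"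
    "Vector_Spaces.linear sc sc (convolution B2 (\<lambda>x. S (B1 x)))"
    using coalg_hom_cocyc by (auto simp: coalg_hom_def intro!: linear_rb_intros linear_convolution linear_B1 linear_B2)
  have cocyc_conv: "\<sigma> = convolution B1 (\<lambda>x. S (B2 x))"
    by (auto simp: cocyc_def convolution_def)
  have "convolution \<sigma> (convolution B2 (\<lambda>x. S (B1 x))) = conv_unit"
    unfolding cocyc_conv
    by (simp add: convolution_assoc linear_B1 linear_B2 lin linear_convolution
        convolution_assoc[symmetric] convolution_antipode_left[OF coalg_hom_B2]
        convolution_unit_left convolution_unit_right convolution_antipode_right[OF coalg_hom_B1])
  then have "convolution (\<lambda>y. S (\<sigma> y)) conv_unit
      = convolution (convolution (\<lambda>y. S (\<sigma> y)) \<sigma>) (convolution B2 (\<lambda>x. S (B1 x)))"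
    by (simp add: convolution_assoc lin)
  then show ?thesis
    by (simp add: convolution_antipode_left[OF coalg_hom_cocyc] convolution_unit_left convolution_unit_right lin)
qed

lemma convolution_antipode_cocyc_B1: "convolution (\<lambda>y. S (\<sigma> y)) B1 = B2"
  unfolding antipode_cocyc
  by (simp add: convolution_assoc linear_B1 linear_B2 linear_comp_antipode
      convolution_antipode_left[OF coalg_hom_B1] convolution_unit_right)

lemma desc_truss_law: "a \<diamond> (b * c) = sw3 (comul2_left D a) (\<lambda>x y z. (x \<diamond> b) * S (\<sigma> y) * (z \<diamond> c))"
proof -
  let ?SB2 = "\<lambda>x. S (B2 x)"
  have lin: "Vector_Spaces.linear sc sc (\<lambda>y. S (\<sigma> y))" "Vector_Spaces.linear sc sc ?SB2"
    "Vector_Spaces.linear sc sc (\<lambda>x. B1 x * b)" "Vector_Spaces.linear sc sc (\<lambda>x. B1 x * c)"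
    "Vector_Spaces.linear sc sc (\<lambda>x. B2 x * c)"
    using coalg_hom_cocyc by (auto simp: coalg_hom_def intro!: linear_rb_intros linear_B1 linear_B2)
  have desc_conv: "(\<lambda>x. x \<diamond> d) = convolution (\<lambda>x. B1 x * d) ?SB2" for d
    by (auto simp: desc_def convolution_def)
  have cancel_B2: "convolution ?SB2 (convolution (\<lambda>x. B2 x * c) ?SB2) = (\<lambda>x. c * S (B2 x))"
    by (simp add: convolution_assoc[symmetric] lin convolution_mult_right
        convolution_antipode_left[OF coalg_hom_B2] convolution_unit_mult_left)
  have "sw3 (comul2_left D a) (\<lambda>x y z. (x \<diamond> b) * S (\<sigma> y) * (z \<diamond> c))
      = convolution (convolution (\<lambda>x. x \<diamond> b) (\<lambda>y. S (\<sigma> y))) (\<lambda>x. x \<diamond> c) a"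
    by (simp add: sw3_comul2_left convolution_def sw2_mult_right)
  also have "\<dots> = convolution (\<lambda>x. B1 x * b)
      (convolution ?SB2 (convolution (convolution (\<lambda>y. S (\<sigma> y)) (\<lambda>x. B1 x * c)) ?SB2)) a"
    unfolding desc_conv by (simp add: convolution_assoc linear_convolution lin)
  also have "\<dots> = convolution (\<lambda>x. B1 x * b) (\<lambda>x. c * S (B2 x)) a"
    by (simp add: convolution_mult_right convolution_antipode_cocyc_B1 cancel_B2)
  also have "\<dots> = a \<diamond> (b * c)"
    by (simp add: convolution_def desc_def mult.assoc)
  finally show ?thesis
    by simp
qed

end

theorem mainTheorem7:
  fixes sc :: "'k::field_char_0 \<Rightarrow> 'h::ring_1 \<Rightarrow> 'h"
    and D :: "'h \<Rightarrow> ('h \<times> 'h) list" and \<epsilon> :: "'h \<Rightarrow> 'k" and S B1 B2 :: "'h \<Rightarrow> 'h"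
  assumes "rota_baxter_system sc D \<epsilon> S B1 B2"
  shows "hopf_truss sc D \<epsilon> S (desc D S B1 B2) (cocyc D S B1 B2)"
proof -
  interpret rota_baxter_sys sc D \<epsilon> S B1 B2
    by unfold_locales (use assms in \<open>auto simp: rota_baxter_system_def\<close>)
  show ?thesis
    unfolding hopf_truss_def nonunital_bialgebra_def
    using hopf_algebra linear_desc_left linear_desc_right desc_assoc comul_desc counit_desc
      coalg_hom_cocyc desc_truss_law
    by blast
qed

end
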